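(* Let $(X,d)$ be a metric space with $|X|\ge 2$, let $\tilde x=(x_n)$ be a sequence of points of $X$, and let $\tilde x'=(x_{n(k)})$ be an infinite subsequence of $\tilde x$ such that $\limsup_{n\to\infty}\frac{|K_{\tilde x'}(n)|}{n}=0$. Then there exist a sequence $\tilde y$ of points of $X$ and a subsequence $\tilde y'$ of $\tilde y$ such that $\tilde x$ and $\tilde y$ are statistically equivalent, $K_{\tilde y'}=K_{\tilde x'}$, and $\tilde y'$ is not $d$-statistically convergent.
   Context: For a subsequence $\tilde z'=(z_{n(k)})$ of a sequence $(z_n)$ (with $(n(k))$ strictly increasing), $K_{\tilde z'}=\{n(k):k\in\mathbb N\}$ and $K_{\tilde z'}(n)=\{m\in K_{\tilde z'}: m\le n\}$. A set $M\subseteq\mathbb N$ is statistical dense if $\lim_{n\to\infty}|\{m\in M:m\le n\}|/n=1$. Sequences $(x_n),(y_n)$ are statistically equivalent if $x_n=y_n$ for all $n$ in some statistical dense set $M\subseteq\mathbb N$. A sequence $(z_k)$ is $d$-statistically convergent if there is $a\in X$ with $\lim_{n\to\infty}\frac1n|\{k\le n: d(z_k,a)\ge\epsilon\}|=0$ for every $\epsilon>0$; a subsequence $(y_{n(k)})_k$ is regarded as the sequence $k\mapsto y_{n(k)}$. *)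

theory Defs
  imports "HOL-Analysis.Analysis"
begin

text \<open>The index set of a subsequence given by a strictly increasing index map r.\<close>
definition K_sub :: "(nat \<Rightarrow> nat) \<Rightarrow> nat set" where
  "K_sub r = range r"

definition count_upto :: "nat set \<Rightarrow> nat \<Rightarrow> nat" where
  "count_upto M n = card {m \<in> M. m \<le> n}"

definition stat_dense :: "nat set \<Rightarrow> bool" where
  "stat_dense M \<longleftrightarrow> (\<lambda>n. real (count_upto M n) / real n) \<longlonglongrightarrow> 1"

definition stat_equivalent :: "(nat \<Rightarrow> 'a) \<Rightarrow> (nat \<Rightarrow> 'a) \<Rightarrow> bool" where
  "stat_equivalent x y \<longleftrightarrow> (\<exists>M. stat_dense M \<and> (\<forall>n\<in>M. x n = y n))"

text \<open>d-statistical convergence; the sequence is indexed from 0, so the first n terms are k < n.\<close>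
definition d_stat_convergent :: "(nat \<Rightarrow> 'a::metric_space) \<Rightarrow> bool" where
  "d_stat_convergent z \<longleftrightarrow> (\<exists>a. \<forall>\<epsilon>>0.
     (\<lambda>n. real (card {k. k < n \<and> dist (z k) a \<ge> \<epsilon>}) / real n) \<longlonglongrightarrow> 0)"

end

theory Submission
  imports Defs
begin

text \<open>
  Put an alternating sequence a, b, a, b, ... with a \<noteq> b on the indices of the subsequence and keep
  x elsewhere. The subsequence indices have density zero, so their complement is statistically
  dense and the new sequence is statistically equivalent to x. The alternating subsequence is not
  statistically convergent: any candidate limit is at distance at least d(a,b)/2 from a or from b,
  hence far from at least half of the terms.
\<close>

lemma card_even_below: "card {k. k < n \<and> even k} = (n + 1) div 2"
proof (induction n)
  case (Suc n)
  have "{k. k < Suc n \<and> even k} =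
      (if even n then insert n {k. k < n \<and> even k} else {k. k < n \<and> even k})"
    by (auto simp: less_Suc_eq)
  then show ?case using Suc by (auto simp: card_insert_if elim!: evenE oddE)
qed simp

lemma card_odd_below: "card {k. k < n \<and> odd k} = n div 2"
proof (induction n)
  case (Suc n)
  have "{k. k < Suc n \<and> odd k} =
      (if odd n then insert n {k. k < n \<and> odd k} else {k. k < n \<and> odd k})"
    by (auto simp: less_Suc_eq)
  then show ?case using Suc by (auto simp: card_insert_if elim!: evenE oddE)
qed simp

lemma not_d_stat_convergent_alternating:
  fixes a b :: "'a::metric_space"
  assumes "a \<noteq> b"
  shows "\<not> d_stat_convergent (\<lambda>k. if even k then a else b)"
proof
  let ?z = "\<lambda>k. if even k then a else b"
  assume "d_stat_convergent ?z"
  then obtain c where c: "\<And>e. e > 0 \<Longrightarrow>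
      (\<lambda>n. real (card {k. k < n \<and> dist (?z k) c \<ge> e}) / real n) \<longlonglongrightarrow> 0"
    unfolding d_stat_convergent_def by blast
  define e where "e = dist a b / 2"
  define far where "far n = {k. k < n \<and> dist (?z k) c \<ge> e}" for n :: nat
  have "e > 0" using assms by (simp add: e_def)
  have "dist a c \<ge> e \<or> dist b c \<ge> e"
    using dist_triangle3[of a b c] dist_commute[of c a] dist_commute[of c b] unfolding e_def by linarith
  then have half: "n div 2 \<le> card (far n)" for n
  proof
    assume "dist a c \<ge> e"
    then have "{k. k < n \<and> even k} \<subseteq> far n" by (auto simp: far_def)
    then have "card {k. k < n \<and> even k} \<le> card (far n)"
      by (intro card_mono) (auto simp: far_def)
    then show ?thesis using card_even_below[of n] by linarith
  next
    assume "dist b c \<ge> e"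
    then have "{k. k < n \<and> odd k} \<subseteq> far n" by (auto simp: far_def)
    then have "card {k. k < n \<and> odd k} \<le> card (far n)"
      by (intro card_mono) (auto simp: far_def)
    then show ?thesis using card_odd_below[of n] by linarith
  qed
  have quarter: "1/4 \<le> real (card (far n)) / real n" if "n \<ge> 2" for n
  proof -
    have "real n \<le> 4 * real (card (far n))"
      using half[of n] that by linarith
    then show ?thesis using that by (simp add: field_simps)
  qed
  have "eventually (\<lambda>n. real (card (far n)) / real n < 1/4) sequentially"
    using c[OF \<open>e > 0\<close>] unfolding far_def by (rule order_tendstoD) simp
  moreover have "eventually (\<lambda>n. n \<ge> (2::nat)) sequentially"
    by (rule eventually_ge_at_top)
  ultimately have "eventually (\<lambda>n. False) sequentially"
    by eventually_elim (use quarter in force)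
  then show False by simp
qed

lemma tendsto_zero_if_limsup_zero:
  fixes f :: "nat \<Rightarrow> real"
  assumes "limsup (\<lambda>n. ereal (f n)) = 0" and "\<And>n. f n \<ge> 0"
  shows "f \<longlonglongrightarrow> 0"
proof (rule limsup_le_liminf_real)
  show "limsup f \<le> ereal 0" using assms by simp
  show "ereal 0 \<le> liminf f" using assms by (intro Liminf_bounded) auto
qed

lemma count_upto_Compl: "count_upto (- K) n + count_upto K n = n + 1"
proof -
  have "{m \<in> - K. m \<le> n} \<union> {m \<in> K. m \<le> n} = {..n}"
    "{m \<in> - K. m \<le> n} \<inter> {m \<in> K. m \<le> n} = {}"
    by auto
  then have "card {m \<in> - K. m \<le> n} + card {m \<in> K. m \<le> n} = card {..n}"
    by (metis card_Un_disjoint finite_Un finite_atMost)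
  then show ?thesis by (simp add: count_upto_def)
qed

lemma stat_dense_Compl:
  assumes "(\<lambda>n. real (count_upto K n) / real n) \<longlonglongrightarrow> 0"
  shows "stat_dense (- K)"
proof -
  have "(\<lambda>n. 1 + 1 / real n - real (count_upto K n) / real n) \<longlonglongrightarrow> 1 + 0 - 0"
    by (intro tendsto_intros assms lim_inverse_n')
  moreover have "eventually (\<lambda>n. 1 + 1 / real n - real (count_upto K n) / real n
      = real (count_upto (- K) n) / real n) sequentially"
    using eventually_gt_at_top[of 0]
  proof eventually_elim
    case (elim n)
    have "real (count_upto (- K) n) = real n + 1 - real (count_upto K n)"
      using count_upto_Compl[of K n] by linarith
    then show ?case using elim by (simp add: diff_divide_distrib add_divide_distrib)
  qed
  ultimately show ?thesis
    unfolding stat_dense_def by (simp add: tendsto_cong)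
qed

theorem lemma2:
  fixes x :: "nat \<Rightarrow> 'a::metric_space" and r :: "nat \<Rightarrow> nat"
  assumes two: "\<exists>a b::'a. a \<noteq> b"
    and sub: "strict_mono r"
    and zero: "limsup (\<lambda>n. ereal (real (count_upto (K_sub r) n) / real n)) = 0"
  shows "\<exists>(y :: nat \<Rightarrow> 'a) s. strict_mono s \<and> stat_equivalent x y
           \<and> K_sub s = K_sub r \<and> \<not> d_stat_convergent (\<lambda>k. y (s k))"
proof -
  obtain a b :: 'a where "a \<noteq> b" using two by blast
  define y where "y n = (if n \<in> range r then (if even (inv r n) then a else b) else x n)" for n
  have "(\<lambda>k. y (r k)) = (\<lambda>k. if even k then a else b)"
    using strict_mono_imp_inj_on[OF sub] by (auto simp: y_def)
  then have not_conv: "\<not> d_stat_convergent (\<lambda>k. y (r k))"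
    using not_d_stat_convergent_alternating[OF \<open>a \<noteq> b\<close>] by simp
  have "stat_dense (- K_sub r)"
    using zero by (intro stat_dense_Compl tendsto_zero_if_limsup_zero) simp_all
  moreover have "\<forall>n \<in> - K_sub r. x n = y n" by (simp add: K_sub_def y_def)
  ultimately have "stat_equivalent x y"
    unfolding stat_equivalent_def by blast
  then show ?thesis using sub not_conv by blast
qed

end
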